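(* Let $(X,\Delta,\varepsilon,T)$ be a TSD object over a field $\mathbb k$, let $R=\mathbb k[[\hbar]]/(\hbar^2)$ and $X_\hbar=X\otimes_{\mathbb k}R$ with $\Delta$, $\Delta_3$ extended $R$-linearly. For a $\mathbb k$-linear $\psi\colon X^{\otimes 3}\to X$ let $T_\psi=T+\hbar\psi$ (extended $R$-linearly). Then: (1) $T_\psi$ is an infinitesimal deformation of $T$ if and only if $\psi\in Z^2_{\rm TSD}(X;X)$; (2) for $\psi,\psi'\in Z^2_{\rm TSD}(X;X)$, the deformations $T_\psi$ and $T_{\psi'}$ are equivalent if and only if $\psi-\psi'\in B^2_{\rm TSD}(X;X)$. Consequently, equivalence classes of infinitesimal deformations of $T$ are in bijection with $H^2_{\rm TSD}(X;X)$.
   Context: A TSD object is a $\mathbb k$-module $X$ with a coassociative counital comultiplication $\Delta$, counit $\varepsilon$, $\Delta_3=(\Delta\otimes\mathbb 1)\Delta$ (Sweedler notation $\Delta_3(w)=w^{(1)}\otimes w^{(2)}\otimes w^{(3)}$), and a linear $T\colon X^{\otimes 3}\to X$ with (i) $\Delta_3T=T^{\otimes 3}\sigma\Delta_3^{\otimes 3}$, where $\sigma$ sends $u_1\otimes\cdots\otimes u_9$ to $u_1\otimes u_4\otimes u_7\otimes u_2\otimes u_5\otimes u_8\otimes u_3\otimes u_6\otimes u_9$, and (ii) $T(T(x\otimes y\otimes z)\otimes w\otimes u)=T(T(x\otimes w^{(1)}\otimes u^{(1)})\otimes T(y\otimes w^{(2)}\otimes u^{(2)})\otimes T(z\otimes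 w^{(3)}\otimes u^{(3)}))$. An infinitesimal deformation of $T$ is an $R$-linear $T'\colon X_\hbar^{\otimes 3}\to X_\hbar$ with $T'\equiv T$ mod $\hbar$ such that $(X_\hbar,\Delta,T')$ satisfies (i) and (ii). Two deformations $T',T''$ are equivalent if there is an $R$-linear $g\colon X_\hbar\to X_\hbar$ with $g\equiv\mathbb 1$ mod $\hbar$, $\Delta_3 g=g^{\otimes 3}\Delta_3$ and $g\circ T'=T''\circ g^{\otimes 3}$. TSD cohomology: $C^1_{\rm TSD}(X;X)$ = ternary coderivations $f$ (i.e. $\Delta_3 f=(f\otimes\mathbb 1\otimes\mathbb 1+\mathbb 1\otimes f\otimes\mathbb 1+\mathbb 1\otimes\mathbb 1\otimes f)\Delta_3$); $C^2_{\rm TSD}(X;X)$ = linear $\psi\colon X^{\otimes 3}\to X$ with $\Delta_3\psi=(\psi\otimes T\otimes T+T\otimes\psi\otimes T+T\otimes T\otimes\psi)\sigma\Delta_3^{\otimes 3}$; $\delta^1 f(x\otimes y\otimes z)=f(T(x\otimes y\otimes z))-T(f(x)\otimes y\otimes z)-T(x\otimes f(y)\otimes z)-T(x\otimes y\otimes f(z))$; $\delta^2\psi(x\otimes y\otimes z\otimes w\otimes u)=T(\psi(x\otimes y\otimes z)\otimes w\otimes u)+\psi(T(x\otimes y\otimes z)\otimes w\otimes u)-\psi(A_1\otimes A_2\otimes A_3)-T(\Psi_1\otimes A_2\otimes A_3)-T(A_1\otimes\Psi_2\otimes A_3)-T(A_1\otimes A_2\otimes\Psi_3)$ with $A_i=T(x_i\otimes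 w^{(i)}\otimes u^{(i)})$, $(x_1,x_2,x_3)=(x,y,z)$, and $\Psi_i$ the same with $\psi$ in place of $T$. $Z^2_{\rm TSD}=C^2_{\rm TSD}\cap\ker\delta^2$, $B^2_{\rm TSD}=\delta^1(C^1_{\rm TSD})$, $H^2_{\rm TSD}=Z^2_{\rm TSD}/B^2_{\rm TSD}$. *)

theory Defs
  imports "HOL-Library.Poly_Mapping"
begin

section \<open>Dual numbers R = k[[h]]/(h^2)\<close>

datatype 'a dual = Dual (re: 'a) (ep: 'a)

instantiation dual :: (comm_ring_1) comm_ring_1
begin
definition "0 = Dual 0 0"
definition "1 = Dual 1 0"
definition "x + y = Dual (re x + re y) (ep x + ep y)"
definition "x - y = Dual (re x - re y) (ep x - ep y)"
definition "- x = Dual (- re x) (- ep x)"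
definition "x * y = Dual (re x * re y) (re x * ep y + ep x * re y)"
instance
  by standard
     (auto simp: zero_dual_def one_dual_def plus_dual_def minus_dual_def
        uminus_dual_def times_dual_def algebra_simps intro: dual.expand)
end

definition hbar :: "'a::comm_ring_1 dual" where "hbar = Dual 0 1"

definition scal :: "'a::comm_ring_1 \<Rightarrow> 'a dual" where "scal c = Dual c 0"

(* A module with basis indexed by 'i is 'i \<Rightarrow>\<^sub>0 'r. A linear map from the module with
 basis 'i to the module with basis 'j is given by its values on the basis,
 i.e. a function 'i \<Rightarrow> ('j \<Rightarrow>\<^sub>0 'r). The tensor product of free modules with bases
 'i and 'j is the free module with basis 'i \<times> 'j. *)

definition smultp :: "'r::comm_ring_1 \<Rightarrow> ('i \<Rightarrow>\<^sub>0 'r) \<Rightarrow> ('i \<Rightarrow>\<^sub>0 'r)" where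
  "smultp c v = Poly_Mapping.map (\<lambda>x. c * x) v"

definition lext :: "('i \<Rightarrow> ('j \<Rightarrow>\<^sub>0 'r::comm_ring_1)) \<Rightarrow> ('i \<Rightarrow>\<^sub>0 'r) \<Rightarrow> ('j \<Rightarrow>\<^sub>0 'r)" where
  "lext f v = (\<Sum>i\<in>Poly_Mapping.keys v. smultp (Poly_Mapping.lookup v i) (f i))"

(* lcomp f g = f \<circ> g (g applied first). *)
definition lcomp :: "('j \<Rightarrow> ('k \<Rightarrow>\<^sub>0 'r::comm_ring_1)) \<Rightarrow> ('i \<Rightarrow> ('j \<Rightarrow>\<^sub>0 'r)) \<Rightarrow> 'i \<Rightarrow> ('k \<Rightarrow>\<^sub>0 'r)" where
  "lcomp f g = (\<lambda>i. lext f (g i))"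

definition idm :: "'i \<Rightarrow> ('i \<Rightarrow>\<^sub>0 'r::comm_ring_1)" where
  "idm i = Poly_Mapping.single i 1"

definition reidx :: "('i \<Rightarrow> 'j) \<Rightarrow> 'i \<Rightarrow> ('j \<Rightarrow>\<^sub>0 'r::comm_ring_1)" where
  "reidx p i = Poly_Mapping.single (p i) 1"

definition tvec2 :: "('i \<Rightarrow>\<^sub>0 'r::comm_ring_1) \<Rightarrow> ('j \<Rightarrow>\<^sub>0 'r) \<Rightarrow> ('i \<times> 'j \<Rightarrow>\<^sub>0 'r)" where
  "tvec2 u v = (\<Sum>i\<in>Poly_Mapping.keys u. \<Sum>j\<in>Poly_Mapping.keys v. Poly_Mapping.single (i, j) (Poly_Mapping.lookup u i * Poly_Mapping.lookup v j))"

definition tvec3 :: "('i \<Rightarrow>\<^sub>0 'r::comm_ring_1) \<Rightarrow> ('j \<Rightarrow>\<^sub>0 'r) \<Rightarrow> ('k \<Rightarrow>\<^sub>0 'r)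
    \<Rightarrow> ('i \<times> 'j \<times> 'k \<Rightarrow>\<^sub>0 'r)" where
  "tvec3 u v w = (\<Sum>i\<in>Poly_Mapping.keys u. \<Sum>j\<in>Poly_Mapping.keys v. \<Sum>k\<in>Poly_Mapping.keys w.
      Poly_Mapping.single (i, j, k) (Poly_Mapping.lookup u i * Poly_Mapping.lookup v j * Poly_Mapping.lookup w k))"

definition tens2 :: "('i \<Rightarrow> ('i' \<Rightarrow>\<^sub>0 'r::comm_ring_1)) \<Rightarrow> ('j \<Rightarrow> ('j' \<Rightarrow>\<^sub>0 'r))
    \<Rightarrow> 'i \<times> 'j \<Rightarrow> ('i' \<times> 'j' \<Rightarrow>\<^sub>0 'r)" where
  "tens2 f g = (\<lambda>(i, j). tvec2 (f i) (g j))"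

definition tens3 :: "('i \<Rightarrow> ('i' \<Rightarrow>\<^sub>0 'r::comm_ring_1)) \<Rightarrow> ('j \<Rightarrow> ('j' \<Rightarrow>\<^sub>0 'r))
    \<Rightarrow> ('k \<Rightarrow> ('k' \<Rightarrow>\<^sub>0 'r)) \<Rightarrow> 'i \<times> 'j \<times> 'k \<Rightarrow> ('i' \<times> 'j' \<times> 'k' \<Rightarrow>\<^sub>0 'r)" where
  "tens3 f g h = (\<lambda>(i, j, k). tvec3 (f i) (g j) (h k))"

(* Delta_3 = (Delta \<otimes> 1) Delta, with X\<otimes>X\<otimes>X identified with basis 'b \<times> 'b \<times> 'b. *)
definition comult3 :: "('b \<Rightarrow> ('b \<times> 'b \<Rightarrow>\<^sub>0 'r::comm_ring_1)) \<Rightarrow> 'b \<Rightarrow> ('b \<times> 'b \<times> 'b \<Rightarrow>\<^sub>0 'r)" where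
  "comult3 D = lcomp (reidx (\<lambda>((i, j), k). (i, j, k))) (lcomp (tens2 D idm) D)"

definition sigma9 :: "('a \<times> 'a \<times> 'a) \<times> ('a \<times> 'a \<times> 'a) \<times> ('a \<times> 'a \<times> 'a)
    \<Rightarrow> (('a \<times> 'a \<times> 'a) \<times> ('a \<times> 'a \<times> 'a) \<times> ('a \<times> 'a \<times> 'a) \<Rightarrow>\<^sub>0 'r::comm_ring_1)" where
  "sigma9 = reidx (\<lambda>((u1, u2, u3), (u4, u5, u6), (u7, u8, u9)).
                     ((u1, u4, u7), (u2, u5, u8), (u3, u6, u9)))"

definition coalgebra :: "('b \<Rightarrow> ('b \<times> 'b \<Rightarrow>\<^sub>0 'r::comm_ring_1)) \<Rightarrow> ('b \<Rightarrow> 'r) \<Rightarrow> bool" where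
  "coalgebra D e \<longleftrightarrow>
     lcomp (tens2 D idm) D = lcomp (reidx (\<lambda>(i, j, k). ((i, j), k))) (lcomp (tens2 idm D) D)
   \<and> lcomp (\<lambda>(i, j). smultp (e i) (idm j)) D = idm
   \<and> lcomp (\<lambda>(i, j). smultp (e j) (idm i)) D = idm"

definition tsd_cond1 :: "('b \<Rightarrow> ('b \<times> 'b \<Rightarrow>\<^sub>0 'r::comm_ring_1)) \<Rightarrow> ('b \<times> 'b \<times> 'b \<Rightarrow> ('b \<Rightarrow>\<^sub>0 'r)) \<Rightarrow> bool" where
  "tsd_cond1 D T \<longleftrightarrow>
     lcomp (comult3 D) T
       = lcomp (tens3 T T T) (lcomp sigma9 (tens3 (comult3 D) (comult3 D) (comult3 D)))"

(* Basis of X^{\<otimes>5} is ('b \<times> 'b \<times> 'b) \<times> 'b \<times> 'b, i.e. ((x,y,z),w,u). *)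
definition tsd_cond2 :: "('b \<Rightarrow> ('b \<times> 'b \<Rightarrow>\<^sub>0 'r::comm_ring_1)) \<Rightarrow> ('b \<times> 'b \<times> 'b \<Rightarrow> ('b \<Rightarrow>\<^sub>0 'r)) \<Rightarrow> bool" where
  "tsd_cond2 D T \<longleftrightarrow>
     lcomp T (tens3 T idm idm)
       = lcomp T (lcomp (tens3 T T T) (lcomp sigma9 (tens3 idm (comult3 D) (comult3 D))))"

definition TSD :: "('b \<Rightarrow> ('b \<times> 'b \<Rightarrow>\<^sub>0 'r::comm_ring_1)) \<Rightarrow> ('b \<Rightarrow> 'r)
    \<Rightarrow> ('b \<times> 'b \<times> 'b \<Rightarrow> ('b \<Rightarrow>\<^sub>0 'r)) \<Rightarrow> bool" where
  "TSD D e T \<longleftrightarrow> coalgebra D e \<and> tsd_cond1 D T \<and> tsd_cond2 D T"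

definition extR :: "('i \<Rightarrow>\<^sub>0 'k::comm_ring_1) \<Rightarrow> ('i \<Rightarrow>\<^sub>0 'k dual)" where
  "extR v = Poly_Mapping.map scal v"

definition modh :: "('i \<Rightarrow>\<^sub>0 'k::comm_ring_1 dual) \<Rightarrow> ('i \<Rightarrow>\<^sub>0 'k)" where
  "modh v = Poly_Mapping.map re v"

definition DeltaR :: "('b \<Rightarrow> ('b \<times> 'b \<Rightarrow>\<^sub>0 'k::comm_ring_1)) \<Rightarrow> 'b \<Rightarrow> ('b \<times> 'b \<Rightarrow>\<^sub>0 'k dual)" where
  "DeltaR D = (\<lambda>b. extR (D b))"

definition epsR :: "('b \<Rightarrow> 'k::comm_ring_1) \<Rightarrow> 'b \<Rightarrow> 'k dual" where
  "epsR e = (\<lambda>b. scal (e b))"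

definition Tpsi :: "('b \<times> 'b \<times> 'b \<Rightarrow> ('b \<Rightarrow>\<^sub>0 'k::comm_ring_1)) \<Rightarrow> ('b \<times> 'b \<times> 'b \<Rightarrow> ('b \<Rightarrow>\<^sub>0 'k))
    \<Rightarrow> 'b \<times> 'b \<times> 'b \<Rightarrow> ('b \<Rightarrow>\<^sub>0 'k dual)" where
  "Tpsi T psi = (\<lambda>t. extR (T t) + smultp hbar (extR (psi t)))"

definition inf_deformation :: "('b \<Rightarrow> ('b \<times> 'b \<Rightarrow>\<^sub>0 'k::comm_ring_1)) \<Rightarrow> ('b \<Rightarrow> 'k)
    \<Rightarrow> ('b \<times> 'b \<times> 'b \<Rightarrow> ('b \<Rightarrow>\<^sub>0 'k)) \<Rightarrow> ('b \<times> 'b \<times> 'b \<Rightarrow> ('b \<Rightarrow>\<^sub>0 'k dual)) \<Rightarrow> bool" where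
  "inf_deformation D e T T' \<longleftrightarrow>
     (\<forall>t. modh (T' t) = T t) \<and> TSD (DeltaR D) (epsR e) T'"

definition deform_equiv :: "('b \<Rightarrow> ('b \<times> 'b \<Rightarrow>\<^sub>0 'k::comm_ring_1))
    \<Rightarrow> ('b \<times> 'b \<times> 'b \<Rightarrow> ('b \<Rightarrow>\<^sub>0 'k dual)) \<Rightarrow> ('b \<times> 'b \<times> 'b \<Rightarrow> ('b \<Rightarrow>\<^sub>0 'k dual)) \<Rightarrow> bool" where
  "deform_equiv D T' T'' \<longleftrightarrow>
     (\<exists>g :: 'b \<Rightarrow> ('b \<Rightarrow>\<^sub>0 'k dual).
        (\<forall>b. modh (g b) = idm b)
      \<and> lcomp (comult3 (DeltaR D)) g = lcomp (tens3 g g g) (comult3 (DeltaR D))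
      \<and> lcomp g T' = lcomp T'' (tens3 g g g))"

definition C1 :: "('b \<Rightarrow> ('b \<times> 'b \<Rightarrow>\<^sub>0 'k::comm_ring_1)) \<Rightarrow> ('b \<Rightarrow> ('b \<Rightarrow>\<^sub>0 'k)) \<Rightarrow> bool" where
  "C1 D f \<longleftrightarrow>
     lcomp (comult3 D) f
       = lcomp (\<lambda>t. tens3 f idm idm t + tens3 idm f idm t + tens3 idm idm f t) (comult3 D)"

definition C2 :: "('b \<Rightarrow> ('b \<times> 'b \<Rightarrow>\<^sub>0 'k::comm_ring_1)) \<Rightarrow> ('b \<times> 'b \<times> 'b \<Rightarrow> ('b \<Rightarrow>\<^sub>0 'k))
    \<Rightarrow> ('b \<times> 'b \<times> 'b \<Rightarrow> ('b \<Rightarrow>\<^sub>0 'k)) \<Rightarrow> bool" where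
  "C2 D T psi \<longleftrightarrow>
     lcomp (comult3 D) psi
       = lcomp (\<lambda>s. tens3 psi T T s + tens3 T psi T s + tens3 T T psi s)
           (lcomp sigma9 (tens3 (comult3 D) (comult3 D) (comult3 D)))"

definition delta1 :: "('b \<times> 'b \<times> 'b \<Rightarrow> ('b \<Rightarrow>\<^sub>0 'k::comm_ring_1)) \<Rightarrow> ('b \<Rightarrow> ('b \<Rightarrow>\<^sub>0 'k))
    \<Rightarrow> 'b \<times> 'b \<times> 'b \<Rightarrow> ('b \<Rightarrow>\<^sub>0 'k)" where
  "delta1 T f = (\<lambda>t. lcomp f T t - lcomp T (tens3 f idm idm) t
                      - lcomp T (tens3 idm f idm) t - lcomp T (tens3 idm idm f) t)"

definition delta2 :: "('b \<Rightarrow> ('b \<times> 'b \<Rightarrow>\<^sub>0 'k::comm_ring_1)) \<Rightarrow> ('b \<times> 'b \<times> 'b \<Rightarrow> ('b \<Rightarrow>\<^sub>0 'k))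
    \<Rightarrow> ('b \<times> 'b \<times> 'b \<Rightarrow> ('b \<Rightarrow>\<^sub>0 'k)) \<Rightarrow> ('b \<times> 'b \<times> 'b) \<times> 'b \<times> 'b \<Rightarrow> ('b \<Rightarrow>\<^sub>0 'k)" where
  "delta2 D T psi =
     (let P = lcomp sigma9 (tens3 idm (comult3 D) (comult3 D)) in
      (\<lambda>s. lcomp T (tens3 psi idm idm) s + lcomp psi (tens3 T idm idm) s
          - lcomp psi (lcomp (tens3 T T T) P) s
          - lcomp T (lcomp (tens3 psi T T) P) s
          - lcomp T (lcomp (tens3 T psi T) P) s
          - lcomp T (lcomp (tens3 T T psi) P) s))"

definition Z2 :: "('b \<Rightarrow> ('b \<times> 'b \<Rightarrow>\<^sub>0 'k::comm_ring_1)) \<Rightarrow> ('b \<times> 'b \<times> 'b \<Rightarrow> ('b \<Rightarrow>\<^sub>0 'k))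
    \<Rightarrow> ('b \<times> 'b \<times> 'b \<Rightarrow> ('b \<Rightarrow>\<^sub>0 'k)) set" where
  "Z2 D T = {psi. C2 D T psi \<and> (\<forall>s. delta2 D T psi s = 0)}"

definition B2 :: "('b \<Rightarrow> ('b \<times> 'b \<Rightarrow>\<^sub>0 'k::comm_ring_1)) \<Rightarrow> ('b \<times> 'b \<times> 'b \<Rightarrow> ('b \<Rightarrow>\<^sub>0 'k))
    \<Rightarrow> ('b \<times> 'b \<times> 'b \<Rightarrow> ('b \<Rightarrow>\<^sub>0 'k)) set" where
  "B2 D T = {delta1 T f | f. C1 D f}"

definition H2 :: "('b \<Rightarrow> ('b \<times> 'b \<Rightarrow>\<^sub>0 'k::comm_ring_1)) \<Rightarrow> ('b \<times> 'b \<times> 'b \<Rightarrow> ('b \<Rightarrow>\<^sub>0 'k))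
    \<Rightarrow> ('b \<times> 'b \<times> 'b \<Rightarrow> ('b \<Rightarrow>\<^sub>0 'k)) set set" where
  "H2 D T = Z2 D T // {(psi, psi'). psi \<in> Z2 D T \<and> psi' \<in> Z2 D T \<and> (\<lambda>t. psi t - psi' t) \<in> B2 D T}"

end

theory Submission
  imports Defs
begin

text \<open>Every \<open>R\<close>-linear map between the free modules involved has the form \<open>A\<^sub>0 + \<hbar> A\<^sub>1\<close>
  with \<open>\<bbbk>\<close>-linear \<open>A\<^sub>0, A\<^sub>1\<close> (\<open>dmap\<close> below). Since \<open>\<hbar>\<^sup>2 = 0\<close>, composing or
  tensoring such maps obeys a Leibniz rule, \<open>(A\<^sub>0 + \<hbar> A\<^sub>1)(B\<^sub>0 + \<hbar> B\<^sub>1) = A\<^sub>0 B\<^sub>0 + \<hbar> (A\<^sub>1 B\<^sub>0 + A\<^sub>0 B\<^sub>1)\<close>. Hence each TSD axiom for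
  \<open>T + \<hbar> \<psi>\<close> splits into the axiom for \<open>T\<close> in order 0 and its linearisation at \<open>T\<close> in order 1,
  which is precisely the condition \<open>\<psi> \<in> C\<^sup>2\<close> resp. \<open>\<delta>\<^sup>2 \<psi> = 0\<close>. Likewise an equivalence
  \<open>g = 1 + \<hbar> f\<close> is compatible with \<open>\<Delta>\<^sub>3\<close> iff \<open>f\<close> is a ternary coderivation, and intertwines
  \<open>T\<^sub>\<psi>\<close> with \<open>T\<^sub>\<psi>\<^sub>'\<close> iff \<open>\<psi> - \<psi>' = \<delta>\<^sup>1 (- f)\<close>. Finally, taking the \<open>\<hbar>\<close>-coefficient is a bijection
  from infinitesimal deformations onto \<open>Z\<^sup>2\<close> carrying equivalence to cohomology, so it descends
  to the quotients.\<close>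

lemma dual_add [simp]: "Dual a b + Dual c d = Dual (a + c) (b + d)"
  by (simp add: plus_dual_def)

lemma dual_mult [simp]: "Dual a b * Dual c d = Dual (a * c) (a * d + b * c)"
  by (simp add: times_dual_def)

lemma dual_zero: "(0::'a::comm_ring_1 dual) = Dual 0 0"
  by (simp add: zero_dual_def)

lemma dual_one: "(1::'a::comm_ring_1 dual) = Dual 1 0"
  by (simp add: one_dual_def)

lemma re_zero [simp]: "re (0::'a::comm_ring_1 dual) = 0"
  by (simp add: zero_dual_def)

lemma ep_zero [simp]: "ep (0::'a::comm_ring_1 dual) = 0"
  by (simp add: zero_dual_def)

lemma sum_Dual: "(\<Sum>x\<in>S. Dual (f x) (g x)) = Dual (sum f S) (sum g S :: 'a::comm_ring_1)"
  by (induction S rule: infinite_finite_induct) (auto simp: dual_zero)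

lemma lookup_map_strict:
  "g 0 = 0 \<Longrightarrow> Poly_Mapping.lookup (Poly_Mapping.map g p) k = g (Poly_Mapping.lookup p k)"
  by transfer (simp add: when_def)

lemma lookup_smultp [simp]: "Poly_Mapping.lookup (smultp c v) i = c * Poly_Mapping.lookup v i"
  by (simp add: smultp_def lookup_map_strict)

lemma smultp_zero [simp]: "smultp c 0 = 0"
  by (rule poly_mapping_eqI) simp

lemma lookup_lext_superset:
  assumes "finite S" "Poly_Mapping.keys v \<subseteq> S"
  shows "Poly_Mapping.lookup (lext f v) j
           = (\<Sum>i\<in>S. Poly_Mapping.lookup v i * Poly_Mapping.lookup (f i) j)"
  unfolding lext_def lookup_sum lookup_smultp
  by (rule sum.mono_neutral_left) (use assms in \<open>auto simp: in_keys_iff\<close>)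

lemma lookup_lext:
  "Poly_Mapping.lookup (lext f v) j
     = (\<Sum>i\<in>Poly_Mapping.keys v. Poly_Mapping.lookup v i * Poly_Mapping.lookup (f i) j)"
  by (rule lookup_lext_superset) auto

lemma lext_add: "lext F (u + v) = lext F u + lext F v"
proof (rule poly_mapping_eqI)
  fix j
  let ?S = "Poly_Mapping.keys u \<union> Poly_Mapping.keys v"
  show "Poly_Mapping.lookup (lext F (u + v)) j = Poly_Mapping.lookup (lext F u + lext F v) j"
    by (simp add: lookup_lext_superset[of ?S] keys_add lookup_add algebra_simps sum.distrib)
qed

lemma lext_uminus: "lext F (- v) = - lext F v"
proof -
  have "Poly_Mapping.keys (- v) = Poly_Mapping.keys v"
    by (auto simp: in_keys_iff)
  then show ?thesis
    by (intro poly_mapping_eqI) (simp add: lookup_lext sum_negf)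
qed

lemma lext_add_fun: "lext (\<lambda>i. F i + G i) v = lext F v + lext G v"
  by (rule poly_mapping_eqI) (simp add: lookup_lext lookup_add algebra_simps sum.distrib)

lemma lext_uminus_fun: "lext (\<lambda>i. - F i) v = - lext F v"
  by (rule poly_mapping_eqI) (simp add: lookup_lext sum_negf)

lemma lext_diff_fun: "lext (\<lambda>i. F i - G i) v = lext F v - lext G v"
  by (rule poly_mapping_eqI) (simp add: lookup_lext lookup_minus algebra_simps sum_subtractf)

lemma lext_zero [simp]: "lext F 0 = 0"
  by (simp add: lext_def)

lemma lext_zero_fun [simp]: "lext (\<lambda>_. 0) v = 0"
  by (rule poly_mapping_eqI) (simp add: lookup_lext)

lemma lext_idm [simp]: "lext F (idm i) = F i"
  by (rule poly_mapping_eqI) (simp add: lookup_lext idm_def)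

lemma sum_when_const: "(\<Sum>k\<in>K. (f k when P)) = ((\<Sum>k\<in>K. f k) when P)"
  by (cases P) (auto simp: when_def)

lemma sum_when_eq: "finite K \<Longrightarrow> (\<Sum>k\<in>K. (f k when c = k)) = (f c when c \<in> K)"
  by (simp add: when_def sum.delta)

lemma lext_idm_fun [simp]: "lext idm v = v"
proof (rule poly_mapping_eqI)
  fix k
  have "Poly_Mapping.lookup (lext idm v) k
          = (\<Sum>i\<in>Poly_Mapping.keys v. (Poly_Mapping.lookup v i when k = i))"
    by (simp add: lookup_lext idm_def lookup_single mult_when eq_commute)
  also have "\<dots> = Poly_Mapping.lookup v k"
    by (simp add: sum_when_eq) (auto simp: when_def in_keys_iff)
  finally show "Poly_Mapping.lookup (lext idm v) k = Poly_Mapping.lookup v k" .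
qed

lemma lookup_tvec2 [simp]:
  "Poly_Mapping.lookup (tvec2 u v) (a, b) = Poly_Mapping.lookup u a * Poly_Mapping.lookup v b"
proof -
  have split: "((x::'z::zero) when (i, j) = (a, b)) = ((x when b = j) when a = i)" for x i j
    by (auto simp: when_def)
  have "Poly_Mapping.lookup (tvec2 u v) (a, b) =
    (\<Sum>i\<in>Poly_Mapping.keys u. \<Sum>j\<in>Poly_Mapping.keys v.
       ((Poly_Mapping.lookup u i * Poly_Mapping.lookup v j when b = j) when a = i))"
    unfolding tvec2_def lookup_sum lookup_single split ..
  also have "\<dots> = ((Poly_Mapping.lookup u a * Poly_Mapping.lookup v b
      when b \<in> Poly_Mapping.keys v) when a \<in> Poly_Mapping.keys u)"
    by (simp only: sum_when_const sum_when_eq finite_keys)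
  also have "\<dots> = Poly_Mapping.lookup u a * Poly_Mapping.lookup v b"
    by (auto simp: in_keys_iff when_def)
  finally show ?thesis .
qed

lemma lookup_tvec3 [simp]:
  "Poly_Mapping.lookup (tvec3 u v w) (a, b, c)
     = Poly_Mapping.lookup u a * Poly_Mapping.lookup v b * Poly_Mapping.lookup w c"
proof -
  have split: "((x::'z::zero) when (i, j, k) = (a, b, c))
                 = (((x when c = k) when b = j) when a = i)" for x i j k
    by (auto simp: when_def)
  have "Poly_Mapping.lookup (tvec3 u v w) (a, b, c) =
    (\<Sum>i\<in>Poly_Mapping.keys u. \<Sum>j\<in>Poly_Mapping.keys v. \<Sum>k\<in>Poly_Mapping.keys w.
       (((Poly_Mapping.lookup u i * Poly_Mapping.lookup v j * Poly_Mapping.lookup w k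
          when c = k) when b = j) when a = i))"
    unfolding tvec3_def lookup_sum lookup_single split ..
  also have "\<dots> = (((Poly_Mapping.lookup u a * Poly_Mapping.lookup v b * Poly_Mapping.lookup w c
      when c \<in> Poly_Mapping.keys w) when b \<in> Poly_Mapping.keys v) when a \<in> Poly_Mapping.keys u)"
    by (simp only: sum_when_const sum_when_eq finite_keys)
  also have "\<dots> = Poly_Mapping.lookup u a * Poly_Mapping.lookup v b * Poly_Mapping.lookup w c"
    by (auto simp: in_keys_iff when_def)
  finally show ?thesis .
qed

lemma tvec3_uminus:
  "tvec3 (- a) b c = - tvec3 a b c" "tvec3 a (- b) c = - tvec3 a b c" "tvec3 a b (- c) = - tvec3 a b c"
  by (rule poly_mapping_eqI; auto)+

lemma tens2_app [simp]: "tens2 F G (a, b) = tvec2 (F a) (G b)"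
  by (simp add: tens2_def)

lemma tens3_app [simp]: "tens3 F G H (a, b, c) = tvec3 (F a) (G b) (H c)"
  by (simp add: tens3_def)

lemma tens2_zero [simp]: "tens2 (\<lambda>_. 0) G t = 0" "tens2 F (\<lambda>_. 0) t = 0"
  by (cases t; auto intro: poly_mapping_eqI)+

lemma tens3_zero [simp]:
  "tens3 (\<lambda>_. 0) G H t = 0" "tens3 F (\<lambda>_. 0) H t = 0" "tens3 F G (\<lambda>_. 0) t = 0"
  by (cases t; auto intro: poly_mapping_eqI)+

lemma tens3_uminus:
  "tens3 (\<lambda>b. - f b) G H t = - tens3 f G H t"
  "tens3 F (\<lambda>b. - f b) H t = - tens3 F f H t"
  "tens3 F G (\<lambda>b. - f b) t = - tens3 F G f t"
  by (cases t; simp add: tvec3_uminus)+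

lemma tens3_idm: "tens3 idm idm idm = idm"
  by (rule ext) (auto intro!: poly_mapping_eqI simp: idm_def lookup_single when_def)

section \<open>Maps over the dual numbers to first order\<close>

definition dvec :: "('i \<Rightarrow>\<^sub>0 'k::comm_ring_1) \<Rightarrow> ('i \<Rightarrow>\<^sub>0 'k) \<Rightarrow> ('i \<Rightarrow>\<^sub>0 'k dual)" where
  "dvec a b = extR a + smultp hbar (extR b)"

definition dmap :: "('i \<Rightarrow> ('j \<Rightarrow>\<^sub>0 'k::comm_ring_1)) \<Rightarrow> ('i \<Rightarrow> ('j \<Rightarrow>\<^sub>0 'k))
    \<Rightarrow> 'i \<Rightarrow> ('j \<Rightarrow>\<^sub>0 'k dual)" where
  "dmap A B = (\<lambda>i. dvec (A i) (B i))"

definition hcoeff :: "('i \<Rightarrow> ('j \<Rightarrow>\<^sub>0 'k::comm_ring_1 dual)) \<Rightarrow> 'i \<Rightarrow> ('j \<Rightarrow>\<^sub>0 'k)" where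
  "hcoeff F = (\<lambda>i. Poly_Mapping.map ep (F i))"

lemma lookup_dvec [simp]:
  "Poly_Mapping.lookup (dvec a b) i = Dual (Poly_Mapping.lookup a i) (Poly_Mapping.lookup b i)"
  unfolding dvec_def extR_def smultp_def
  by (simp add: lookup_add lookup_map_strict scal_def hbar_def dual_zero)

lemma dvec_eq_iff [simp]: "dvec a b = dvec c d \<longleftrightarrow> a = c \<and> b = d"
  by (auto simp: poly_mapping_eq_iff fun_eq_iff)

lemma dmap_eq_iff [simp]: "dmap A B = dmap C E \<longleftrightarrow> A = C \<and> B = E"
  by (auto simp: dmap_def fun_eq_iff)

lemma keys_dvec_subset: "Poly_Mapping.keys (dvec a b) \<subseteq> Poly_Mapping.keys a \<union> Poly_Mapping.keys b"
  by (auto simp: in_keys_iff dual_zero)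

lemma modh_dvec [simp]: "modh (dvec a b) = a"
  by (rule poly_mapping_eqI) (simp add: modh_def lookup_map_strict)

lemma modh_hcoeff_dvec: "w = dvec (modh w) (Poly_Mapping.map ep w)"
  by (rule poly_mapping_eqI) (simp add: modh_def lookup_map_strict dual.expand)

lemma map_ep_dvec [simp]: "Poly_Mapping.map ep (dvec a b) = b"
  by (rule poly_mapping_eqI) (simp add: lookup_map_strict)

lemma hcoeff_dmap [simp]: "hcoeff (dmap A B) = B"
  by (simp add: hcoeff_def dmap_def)

lemma dmap_hcoeff:
  assumes "\<And>i. modh (F i) = A i"
  shows "F = dmap A (hcoeff F)"
  unfolding dmap_def hcoeff_def by (rule ext) (metis assms modh_hcoeff_dvec)

lemma extR_dvec: "extR a = dvec a 0"
  by (rule poly_mapping_eqI) (simp add: extR_def lookup_map_strict scal_def dual_zero)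

lemma smultp_scal_dvec: "smultp (scal c) (dvec a b) = dvec (smultp c a) (smultp c b)"
  by (rule poly_mapping_eqI) (simp add: scal_def)

lemma single_one_dvec: "Poly_Mapping.single i (1::'k::comm_ring_1 dual) = dvec (Poly_Mapping.single i 1) 0"
  by (rule poly_mapping_eqI) (simp add: lookup_single when_def dual_one dual_zero)

lemma lext_dvec: "lext (dmap A B) (dvec a b) = dvec (lext A a) (lext B a + lext A b)"
proof (rule poly_mapping_eqI)
  fix j
  let ?S = "Poly_Mapping.keys a \<union> Poly_Mapping.keys b"
  show "Poly_Mapping.lookup (lext (dmap A B) (dvec a b)) j
          = Poly_Mapping.lookup (dvec (lext A a) (lext B a + lext A b)) j"
    by (simp add: lookup_lext_superset[of ?S] keys_dvec_subset lookup_add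
        sum_Dual sum.distrib dmap_def)
qed

lemma lcomp_dmap [simp]:
  "lcomp (dmap A0 A1) (dmap B0 B1) = dmap (lcomp A0 B0) (\<lambda>i. lext A1 (B0 i) + lext A0 (B1 i))"
  by (simp add: lcomp_def dmap_def lext_dvec[unfolded dmap_def])

lemma tvec2_dvec: "tvec2 (dvec a0 a1) (dvec b0 b1) = dvec (tvec2 a0 b0) (tvec2 a1 b0 + tvec2 a0 b1)"
  by (rule poly_mapping_eqI) (auto simp: lookup_add algebra_simps)

lemma tvec3_dvec: "tvec3 (dvec a0 a1) (dvec b0 b1) (dvec c0 c1) =
   dvec (tvec3 a0 b0 c0) (tvec3 a1 b0 c0 + tvec3 a0 b1 c0 + tvec3 a0 b0 c1)"
  by (rule poly_mapping_eqI) (auto simp: lookup_add algebra_simps)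

lemma tens2_dmap [simp]:
  "tens2 (dmap A0 A1) (dmap B0 B1) = dmap (tens2 A0 B0) (\<lambda>t. tens2 A1 B0 t + tens2 A0 B1 t)"
  by (rule ext) (auto simp: dmap_def tvec2_dvec)

lemma tens3_dmap [simp]: "tens3 (dmap A0 A1) (dmap B0 B1) (dmap E0 E1) =
  dmap (tens3 A0 B0 E0) (\<lambda>t. tens3 A1 B0 E0 t + tens3 A0 B1 E0 t + tens3 A0 B0 E1 t)"
  by (rule ext) (auto simp: dmap_def tvec3_dvec)

lemma idm_dmap: "(idm :: 'i \<Rightarrow> ('i \<Rightarrow>\<^sub>0 'k::comm_ring_1 dual)) = dmap idm (\<lambda>_. 0)"
  by (rule ext) (simp add: idm_def dmap_def single_one_dvec)

lemma reidx_dmap: "(reidx p :: 'i \<Rightarrow> ('j \<Rightarrow>\<^sub>0 'k::comm_ring_1 dual)) = dmap (reidx p) (\<lambda>_. 0)"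
  by (rule ext) (simp add: reidx_def dmap_def single_one_dvec)

lemma sigma9_dmap: "(sigma9 :: _ \<Rightarrow> (_ \<Rightarrow>\<^sub>0 'k::comm_ring_1 dual)) = dmap sigma9 (\<lambda>_. 0)"
  by (simp add: sigma9_def reidx_dmap)

lemma DeltaR_dmap: "DeltaR D = dmap D (\<lambda>_. 0)"
  by (simp add: DeltaR_def dmap_def extR_dvec)

lemma comult3_DeltaR: "comult3 (DeltaR D) = dmap (comult3 D) (\<lambda>_. 0)"
  by (simp add: comult3_def DeltaR_dmap reidx_dmap idm_dmap)

lemma Tpsi_dmap: "Tpsi T psi = dmap T psi"
  by (simp add: Tpsi_def dmap_def dvec_def)

section \<open>Infinitesimal deformations are the 2-cocycles\<close>

lemma coalgebra_DeltaR_iff: "coalgebra (DeltaR D) (epsR e) \<longleftrightarrow> coalgebra D e"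
proof -
  have counit_left: "(\<lambda>(i, j). smultp (epsR e i) (idm j))
                       = dmap (\<lambda>(i, j). smultp (e i) (idm j)) (\<lambda>_. 0)"
    and counit_right: "(\<lambda>(i, j). smultp (epsR e j) (idm i))
                       = dmap (\<lambda>(i, j). smultp (e j) (idm i)) (\<lambda>_. 0)"
    by (rule ext; auto simp: epsR_def idm_dmap dmap_def smultp_scal_dvec)+
  show ?thesis
    unfolding coalgebra_def counit_left counit_right
    unfolding DeltaR_dmap idm_dmap reidx_dmap by simp
qed

lemma tsd_cond1_dmap_iff: "tsd_cond1 (DeltaR D) (dmap T psi) \<longleftrightarrow> tsd_cond1 D T \<and> C2 D T psi"
  unfolding tsd_cond1_def C2_def comult3_DeltaR sigma9_dmap
  by (simp add: lext_add_fun) (simp add: lcomp_def fun_eq_iff lext_add_fun)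

lemma tsd_cond2_dmap_iff:
  "tsd_cond2 (DeltaR D) (dmap T psi) \<longleftrightarrow> tsd_cond2 D T \<and> (\<forall>s. delta2 D T psi s = 0)"
  unfolding tsd_cond2_def comult3_DeltaR sigma9_dmap idm_dmap
  by (simp add: lext_add_fun)
     (simp add: lcomp_def fun_eq_iff lext_add_fun lext_add delta2_def Let_def algebra_simps)

lemma inf_deformation_Tpsi_iff:
  assumes "TSD D e T"
  shows "inf_deformation D e T (Tpsi T psi) \<longleftrightarrow> psi \<in> Z2 D T"
  using assms
  unfolding inf_deformation_def TSD_def Tpsi_dmap coalgebra_DeltaR_iff tsd_cond1_dmap_iff
    tsd_cond2_dmap_iff Z2_def
  by (simp add: dmap_def)

lemma inf_deformation_eq_Tpsi:
  assumes "inf_deformation D e T T'"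
  shows "T' = Tpsi T (hcoeff T')"
proof -
  have "\<forall>t. modh (T' t) = T t"
    using assms unfolding inf_deformation_def by blast
  then show ?thesis
    unfolding Tpsi_dmap by (intro dmap_hcoeff) blast
qed

section \<open>Equivalent deformations differ by a coboundary\<close>

lemma neg_eq_diff3_iff: "- x = - a - b - c \<longleftrightarrow> x = a + b + (c::'a::ab_group_add)"
  by (auto simp: algebra_simps)

lemma C1_uminus: "C1 D (\<lambda>b. - f b) \<longleftrightarrow> C1 D f"
  unfolding C1_def
  by (simp add: lcomp_def fun_eq_iff tens3_uminus lext_uminus lext_uminus_fun lext_add_fun
      lext_add lext_diff_fun neg_eq_diff3_iff)

lemma comult3_compatible_iff_C1:
  "lcomp (comult3 (DeltaR D)) (dmap idm f)
     = lcomp (tens3 (dmap idm f) (dmap idm f) (dmap idm f)) (comult3 (DeltaR D))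
   \<longleftrightarrow> C1 D f"
  unfolding comult3_DeltaR C1_def
  by (simp add: tens3_idm) (simp add: lcomp_def)

lemma add_eq_add3_iff_diff:
  "F + p = q + (A + B + C) \<longleftrightarrow> p - q = A - F + B + (C::'a::ab_group_add)"
  by (simp add: algebra_simps eq_diff_eq diff_eq_eq)

lemma intertwines_Tpsi_iff_delta1:
  "lcomp (dmap idm f) (dmap T psi) = lcomp (dmap T psi') (tens3 (dmap idm f) (dmap idm f) (dmap idm f))
   \<longleftrightarrow> (\<lambda>t. psi t - psi' t) = delta1 T (\<lambda>b. - f b)"
  unfolding delta1_def
  by (simp add: tens3_idm)
     (simp add: lcomp_def fun_eq_iff tens3_uminus lext_uminus lext_uminus_fun lext_add
      add_eq_add3_iff_diff)

lemma deform_equiv_Tpsi_iff: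
  "deform_equiv D (Tpsi T psi) (Tpsi T psi') \<longleftrightarrow> (\<lambda>t. psi t - psi' t) \<in> B2 D T"
proof
  assume "deform_equiv D (Tpsi T psi) (Tpsi T psi')"
  then obtain g where g_mod: "\<And>b. modh (g b) = idm b"
    and g_comult: "lcomp (comult3 (DeltaR D)) g = lcomp (tens3 g g g) (comult3 (DeltaR D))"
    and g_intertwines: "lcomp g (dmap T psi) = lcomp (dmap T psi') (tens3 g g g)"
    unfolding deform_equiv_def Tpsi_dmap by blast
  define f where "f = hcoeff g"
  have g: "g = dmap idm f"
    unfolding f_def using g_mod by (rule dmap_hcoeff)
  have "C1 D (\<lambda>b. - f b)"
    using g_comult unfolding C1_uminus g comult3_compatible_iff_C1 .
  moreover have "(\<lambda>t. psi t - psi' t) = delta1 T (\<lambda>b. - f b)"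
    using g_intertwines unfolding g intertwines_Tpsi_iff_delta1 .
  ultimately show "(\<lambda>t. psi t - psi' t) \<in> B2 D T"
    unfolding B2_def by blast
next
  assume "(\<lambda>t. psi t - psi' t) \<in> B2 D T"
  then obtain f where f: "C1 D f" and diff: "(\<lambda>t. psi t - psi' t) = delta1 T f"
    unfolding B2_def by blast
  let ?g = "dmap idm (\<lambda>b. - f b)"
  have "\<forall>b. modh (?g b) = idm b"
    by (simp add: dmap_def)
  moreover have "lcomp (comult3 (DeltaR D)) ?g = lcomp (tens3 ?g ?g ?g) (comult3 (DeltaR D))"
    unfolding comult3_compatible_iff_C1 C1_uminus by (rule f)
  moreover have "lcomp ?g (dmap T psi) = lcomp (dmap T psi') (tens3 ?g ?g ?g)"
    unfolding intertwines_Tpsi_iff_delta1 minus_minus by (rule diff)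
  ultimately show "deform_equiv D (Tpsi T psi) (Tpsi T psi')"
    unfolding deform_equiv_def Tpsi_dmap by blast
qed

section \<open>Equivalence classes and the second cohomology\<close>

lemma bij_betw_quotient_image:
  assumes k: "bij_betw k A B" and r: "r \<subseteq> A \<times> A" and r': "r' \<subseteq> B \<times> B"
    and rel: "\<And>x y. x \<in> A \<Longrightarrow> y \<in> A \<Longrightarrow> (x, y) \<in> r \<longleftrightarrow> (k x, k y) \<in> r'"
  shows "bij_betw (\<lambda>S. k ` S) (A // r) (B // r')"
proof -
  have class_image: "k ` (r `` {x}) = r' `` {k x}" if x: "x \<in> A" for x
  proof
    show "k ` (r `` {x}) \<subseteq> r' `` {k x}"
      using r x rel by blast
    show "r' `` {k x} \<subseteq> k ` (r `` {x})"
    proof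
      fix w assume w: "w \<in> r' `` {k x}"
      then obtain z where "z \<in> A" "w = k z"
        using r' k by (metis Image_singleton_iff bij_betw_imp_surj_on imageE mem_Sigma_iff subsetD)
      with w x rel show "w \<in> k ` (r `` {x})" by blast
    qed
  qed
  have "inj_on (\<lambda>S. k ` S) (A // r)"
  proof (rule inj_onI)
    fix S1 S2 assume "S1 \<in> A // r" "S2 \<in> A // r" "k ` S1 = k ` S2"
    moreover have "S \<subseteq> A" if "S \<in> A // r" for S
      using that r by (auto simp: quotient_def)
    ultimately show "S1 = S2"
      using inj_on_image_eq_iff[OF bij_betw_imp_inj_on[OF k]] by metis
  qed
  moreover have "(\<lambda>S. k ` S) ` (A // r) = B // r'"
  proof -
    have "(\<lambda>S. k ` S) ` (A // r) = (\<lambda>y. r' `` {y}) ` (k ` A)"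
      unfolding quotient_def using class_image by auto
    also have "\<dots> = B // r'"
      unfolding quotient_def using bij_betw_imp_surj_on[OF k] by auto
    finally show ?thesis .
  qed
  ultimately show ?thesis
    unfolding bij_betw_def by blast
qed

lemma bij_betw_hcoeff_Z2:
  assumes "TSD D e T"
  shows "bij_betw hcoeff {T'. inf_deformation D e T T'} (Z2 D T)"
proof (rule bij_betw_byWitness[where f' = "Tpsi T"])
  show "\<forall>T'\<in>{T'. inf_deformation D e T T'}. Tpsi T (hcoeff T') = T'"
    by (auto dest: inf_deformation_eq_Tpsi[symmetric])
  show "\<forall>psi\<in>Z2 D T. hcoeff (Tpsi T psi) = psi"
    by (simp add: Tpsi_dmap)
  show "hcoeff ` {T'. inf_deformation D e T T'} \<subseteq> Z2 D T"
    using inf_deformation_eq_Tpsi inf_deformation_Tpsi_iff[OF assms] by fastforce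
  show "Tpsi T ` Z2 D T \<subseteq> {T'. inf_deformation D e T T'}"
    using inf_deformation_Tpsi_iff[OF assms] by auto
qed

theorem mainTheorem3:
  fixes D :: "'b \<Rightarrow> ('b \<times> 'b \<Rightarrow>\<^sub>0 'k::field)"
    and e :: "'b \<Rightarrow> 'k"
    and T :: "'b \<times> 'b \<times> 'b \<Rightarrow> ('b \<Rightarrow>\<^sub>0 'k)"
  assumes "TSD D e T"
  shows "(\<forall>psi. inf_deformation D e T (Tpsi T psi) \<longleftrightarrow> psi \<in> Z2 D T)
       \<and> (\<forall>psi psi'. psi \<in> Z2 D T \<longrightarrow> psi' \<in> Z2 D T \<longrightarrow>
            (deform_equiv D (Tpsi T psi) (Tpsi T psi') \<longleftrightarrow> (\<lambda>t. psi t - psi' t) \<in> B2 D T))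
       \<and> (\<exists>\<Phi>. bij_betw \<Phi>
              ({T'. inf_deformation D e T T'} // {(T', T''). inf_deformation D e T T'
                    \<and> inf_deformation D e T T'' \<and> deform_equiv D T' T''})
              (H2 D T))"
proof (intro conjI allI impI)
  show "inf_deformation D e T (Tpsi T psi) \<longleftrightarrow> psi \<in> Z2 D T" for psi
    using inf_deformation_Tpsi_iff[OF assms] .
  show "deform_equiv D (Tpsi T psi) (Tpsi T psi') \<longleftrightarrow> (\<lambda>t. psi t - psi' t) \<in> B2 D T" for psi psi'
    by (rule deform_equiv_Tpsi_iff)
  let ?A = "{T'. inf_deformation D e T T'}"
  let ?equiv = "{(T', T''). inf_deformation D e T T' \<and> inf_deformation D e T T''
                  \<and> deform_equiv D T' T''}"
  let ?cohom = "{(psi, psi'). psi \<in> Z2 D T \<and> psi' \<in> Z2 D T \<and> (\<lambda>t. psi t - psi' t) \<in> B2 D T}"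
  have classes_match: "(T', T'') \<in> ?equiv \<longleftrightarrow> (hcoeff T', hcoeff T'') \<in> ?cohom"
    if "T' \<in> ?A" "T'' \<in> ?A" for T' T''
    using that inf_deformation_eq_Tpsi[of D e T] deform_equiv_Tpsi_iff[of D T]
      bij_betw_apply[OF bij_betw_hcoeff_Z2[OF assms]] by (metis (lifting) case_prod_conv mem_Collect_eq)
  have "bij_betw (\<lambda>S. hcoeff ` S) (?A // ?equiv) (Z2 D T // ?cohom)"
    by (rule bij_betw_quotient_image[OF bij_betw_hcoeff_Z2[OF assms] _ _ classes_match]) auto
  then show "\<exists>\<Phi>. bij_betw \<Phi> (?A // ?equiv) (H2 D T)"
    unfolding H2_def by blast
qed

end
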